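(* Consider a VCG combinatorial auction with a set $G$ of items, $|G|\ge3$, and a set $N$ of agents, $|N|\ge2$, and let $s=(s_1,\dots,s_n)$ be an efficient ex-post equilibrium. Then there exists a type profile $\theta=(\theta_1,\dots,\theta_n)$ and an agent $i\in N$ such that for every pair of bundles $X,Y\in2^G$ with $X\subset Y$ (proper inclusion), $s_i(X,\theta_i)\ne s_i(Y,\theta_i)$.
   Context: Combinatorial auction: items $G$, agents $N$; an outcome assigns pairwise disjoint bundles $o_i\subseteq G$. Types: valuations $v_i(\cdot,\theta_i):2^G\to\mathbb{R}_{\ge0}$ with $v_i(\emptyset,\theta_i)=0$ and monotone under inclusion; utilities quasilinear. VCG mechanism (direct): each agent reports a valuation (a bid $x_i(B)$ for each bundle $B$); an outcome maximizing $\sum_i x_i(o_i)$ is chosen; agent $i$ pays $\max_{o'}\sum_{j\ne i}x_j(o'_j)-\sum_{j\ne i}x_j(o_j)$. A strategy $s_i$ maps agent $i$'s type to a report; $s_i(X,\theta_i)$ denotes the bid of agent $i$ with type $\theta_i$ on bundle $X$. $s$ is an ex-post equilibrium if for every type profile $\theta$ and agent $i$, $s_i(\theta_i)$ is a best response to $s_{-i}(\theta_{-i})$; it is efficient if for every type profile the chosen outcome maximizes total true value. *)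

theory Defs
  imports Complex_Main
begin

definition valuation :: "'b set \<Rightarrow> ('b set \<Rightarrow> real) \<Rightarrow> bool" where
  "valuation G v \<longleftrightarrow> v {} = 0 \<and> (\<forall>B. B \<subseteq> G \<longrightarrow> 0 \<le> v B)
     \<and> (\<forall>A B. A \<subseteq> B \<and> B \<subseteq> G \<longrightarrow> v A \<le> v B)
     \<and> (\<forall>B. \<not> B \<subseteq> G \<longrightarrow> v B = 0)"

definition outcomes :: "'a set \<Rightarrow> 'b set \<Rightarrow> ('a \<Rightarrow> 'b set) set" where
  "outcomes N G = {ou. (\<forall>i\<in>N. ou i \<subseteq> G) \<and> (\<forall>i. i \<notin> N \<longrightarrow> ou i = {})
                     \<and> (\<forall>i\<in>N. \<forall>j\<in>N. i \<noteq> j \<longrightarrow> ou i \<inter> ou j = {})}"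

definition welfare :: "'a set \<Rightarrow> ('a \<Rightarrow> 'b set \<Rightarrow> real) \<Rightarrow> ('a \<Rightarrow> 'b set) \<Rightarrow> real" where
  "welfare M x ou = (\<Sum>i\<in>M. x i (ou i))"

definition vcg_rule :: "'a set \<Rightarrow> 'b set \<Rightarrow> (('a \<Rightarrow> 'b set \<Rightarrow> real) \<Rightarrow> ('a \<Rightarrow> 'b set)) \<Rightarrow> bool" where
  "vcg_rule N G f \<longleftrightarrow> (\<forall>x. (\<forall>i\<in>N. valuation G (x i)) \<longrightarrow>
      f x \<in> outcomes N G \<and> (\<forall>ou\<in>outcomes N G. welfare N x ou \<le> welfare N x (f x)))"

definition vcg_payment :: "'a set \<Rightarrow> 'b set \<Rightarrow> ('a \<Rightarrow> 'b set \<Rightarrow> real) \<Rightarrow> ('a \<Rightarrow> 'b set) \<Rightarrow> 'a \<Rightarrow> real" where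
  "vcg_payment N G x ou i =
     Max ((\<lambda>ou'. welfare (N - {i}) x ou') ` outcomes N G) - welfare (N - {i}) x ou"

definition vcg_utility :: "'a set \<Rightarrow> 'b set \<Rightarrow> (('a \<Rightarrow> 'b set \<Rightarrow> real) \<Rightarrow> ('a \<Rightarrow> 'b set))
    \<Rightarrow> ('b set \<Rightarrow> real) \<Rightarrow> ('a \<Rightarrow> 'b set \<Rightarrow> real) \<Rightarrow> 'a \<Rightarrow> real" where
  "vcg_utility N G f v x i = v (f x i) - vcg_payment N G x (f x) i"

definition type_profile :: "'a set \<Rightarrow> 'b set \<Rightarrow> ('a \<Rightarrow> 'b set \<Rightarrow> real) \<Rightarrow> bool" where
  "type_profile N G \<theta> \<longleftrightarrow> (\<forall>i\<in>N. valuation G (\<theta> i))"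

definition strategy_profile :: "'a set \<Rightarrow> 'b set \<Rightarrow> ('a \<Rightarrow> ('b set \<Rightarrow> real) \<Rightarrow> ('b set \<Rightarrow> real)) \<Rightarrow> bool" where
  "strategy_profile N G s \<longleftrightarrow> (\<forall>i\<in>N. \<forall>v. valuation G v \<longrightarrow> valuation G (s i v))"

definition ex_post_equilibrium ::
  "'a set \<Rightarrow> 'b set \<Rightarrow> (('a \<Rightarrow> 'b set \<Rightarrow> real) \<Rightarrow> ('a \<Rightarrow> 'b set))
    \<Rightarrow> ('a \<Rightarrow> ('b set \<Rightarrow> real) \<Rightarrow> ('b set \<Rightarrow> real)) \<Rightarrow> bool" where
  "ex_post_equilibrium N G f s \<longleftrightarrow> strategy_profile N G s \<and>
     (\<forall>\<theta>. type_profile N G \<theta> \<longrightarrow> (\<forall>i\<in>N. \<forall>r. valuation G r \<longrightarrow>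
        vcg_utility N G f (\<theta> i) ((\<lambda>j. s j (\<theta> j))(i := r)) i
          \<le> vcg_utility N G f (\<theta> i) (\<lambda>j. s j (\<theta> j)) i))"

definition efficient ::
  "'a set \<Rightarrow> 'b set \<Rightarrow> (('a \<Rightarrow> 'b set \<Rightarrow> real) \<Rightarrow> ('a \<Rightarrow> 'b set))
    \<Rightarrow> ('a \<Rightarrow> ('b set \<Rightarrow> real) \<Rightarrow> ('b set \<Rightarrow> real)) \<Rightarrow> bool" where
  "efficient N G f s \<longleftrightarrow> (\<forall>\<theta>. type_profile N G \<theta> \<longrightarrow>
     (\<forall>ou\<in>outcomes N G. welfare N \<theta> ou \<le> welfare N \<theta> (f (\<lambda>j. s j (\<theta> j)))))"

end

theory Submission
  imports Defs
begin

text \<open>Give agent i2 the additive valuation B \<mapsto> |B|, and suppose its equilibrium bid were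
  flat on some X \<subset> Y. Give a second agent i1 a valuation worth 2 per item outside Y plus a
  bonus of 1/2 for receiving all of G - X. Efficiency then forces the allocation G - Y to i1
  and Y to i2. But in an ex-post equilibrium of VCG every agent's outcome maximises its true
  value plus the others' bids; the allocation G - X to i1 and X to i2 beats it by exactly the
  bonus, since i2 bids the same on X and on Y. Hence equilibrium bids of i2 are strictly
  increasing along proper inclusions; the argument needs only two items.\<close>

lemma welfare_remove:
  assumes "finite M" "i \<in> M"
  shows "welfare M x ou = x i (ou i) + welfare (M - {i}) x ou"
  using assms by (simp add: welfare_def sum.remove)

lemma welfare_concentrated:
  assumes "finite M" "i \<in> M" "\<And>j. j \<in> M \<Longrightarrow> j \<noteq> i \<Longrightarrow> x j (ou j) = 0"
  shows "welfare M x ou = x i (ou i)"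
proof -
  have "welfare (M - {i}) x ou = 0"
    unfolding welfare_def using assms(3) by (intro sum.neutral) auto
  then show ?thesis
    using assms(1,2) by (simp add: welfare_remove)
qed

lemma valuation_zero: "valuation G (\<lambda>_. 0)"
  by (simp add: valuation_def)

text \<open>The VCG payment of agent i does not depend on its own report, so a deviation to the
  true valuation earns i the maximum of its true value plus the others' reported welfare.\<close>
lemma vcg_ex_post_equilibrium_maximizes:
  assumes "finite N" "vcg_rule N G f" "ex_post_equilibrium N G f s" "type_profile N G \<theta>"
    and "i \<in> N" "ou \<in> outcomes N G"
  defines "b \<equiv> \<lambda>j. s j (\<theta> j)"
  shows "\<theta> i (ou i) + welfare (N - {i}) b ou \<le> \<theta> i (f b i) + welfare (N - {i}) b (f b)"
proof -
  let ?x = "b(i := \<theta> i)"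
  have "strategy_profile N G s"
    using assms(3) by (simp add: ex_post_equilibrium_def)
  then have valid: "\<forall>j\<in>N. valuation G (?x j)"
    using assms(4) by (simp add: b_def strategy_profile_def type_profile_def)
  have others: "welfare (N - {i}) ?x = welfare (N - {i}) b"
    unfolding welfare_def by (intro ext sum.cong) auto
  have "welfare N ?x ou \<le> welfare N ?x (f ?x)"
    using assms(2,6) valid by (simp add: vcg_rule_def)
  then have "\<theta> i (ou i) + welfare (N - {i}) b ou \<le> \<theta> i (f ?x i) + welfare (N - {i}) b (f ?x)"
    using assms(1,5) by (simp add: welfare_remove others)
  also have "\<dots> \<le> \<theta> i (f b i) + welfare (N - {i}) b (f b)"
  proof -
    have "valuation G (\<theta> i)"
      using assms(4,5) by (simp add: type_profile_def)
    then have "vcg_utility N G f (\<theta> i) ?x i \<le> vcg_utility N G f (\<theta> i) b i"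
      using assms(3-5) unfolding ex_post_equilibrium_def b_def by blast
    then show ?thesis
      by (simp add: vcg_utility_def vcg_payment_def others)
  qed
  finally show ?thesis .
qed

definition card_valuation :: "'b set \<Rightarrow> 'b set \<Rightarrow> real" where
  "card_valuation G B = (if B \<subseteq> G then real (card B) else 0)"

definition bonus_valuation :: "'b set \<Rightarrow> 'b set \<Rightarrow> 'b set \<Rightarrow> 'b set \<Rightarrow> real" where
  "bonus_valuation G X Y B =
     (if B \<subseteq> G then 2 * real (card (B - Y)) + (if G - X \<subseteq> B then 1/2 else 0) else 0)"

lemma valuation_card_valuation:
  assumes "finite G"
  shows "valuation G (card_valuation G)"
  using assms by (auto simp: valuation_def card_valuation_def intro: card_mono finite_subset)

lemma valuation_bonus_valuation:
  assumes "finite G" "X \<subset> G"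
  shows "valuation G (bonus_valuation G X Y)"
  unfolding valuation_def
proof (intro conjI allI impI)
  fix A B assume AB: "A \<subseteq> B \<and> B \<subseteq> G"
  then have "card (A - Y) \<le> card (B - Y)"
    using assms(1) by (intro card_mono) (auto intro: finite_subset)
  then show "bonus_valuation G X Y A \<le> bonus_valuation G X Y B"
    using AB by (auto simp: bonus_valuation_def)
qed (use assms(2) in \<open>auto simp: bonus_valuation_def\<close>)

text \<open>The bonus can only be collected by a bundle that meets Y, and every item of Y it
  takes costs 1 in the additive valuation while gaining nothing in the bonus valuation.\<close>
lemma bonus_card_optimum_unique:
  assumes "finite G" "X \<subset> Y" "Y \<subseteq> G" "A \<subseteq> G" "B \<subseteq> G" "A \<inter> B = {}"
    and "bonus_valuation G X Y (G - Y) + card_valuation G Y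
           \<le> bonus_valuation G X Y A + card_valuation G B"
  shows "A = G - Y \<and> B = Y"
proof -
  have fin: "finite A" "finite B" "finite Y"
    using assms finite_subset by blast+
  have no_bonus: "\<not> G - X \<subseteq> G - Y"
    using assms(2,3) by blast
  have le: "2 * real (card (G - Y)) + real (card Y)
      \<le> 2 * real (card (A - Y)) + (if G - X \<subseteq> A then 1/2 else 0) + real (card B)"
    using assms(3-5,7) no_bonus by (simp add: bonus_valuation_def card_valuation_def)
  have "card B \<le> card (G - A)"
    using assms(1,4-6) by (intro card_mono) auto
  moreover have "card A + card (G - A) = card G"
    using assms(1,4) fin by (simp add: card_Diff_subset card_mono)
  moreover have "card A = card (A \<inter> Y) + card (A - Y)"
    using fin(1) by (rule card_Int_Diff)
  moreover have "card (G - Y) + card Y = card G"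
    using assms(1,3) fin by (simp add: card_Diff_subset card_mono)
  moreover have sub: "A - Y \<subseteq> G - Y"
    using assms(4) by blast
  then have "card (A - Y) \<le> card (G - Y)"
    using assms(1) by (intro card_mono) auto
  moreover have "card (A \<inter> Y) \<noteq> 0" if "G - X \<subseteq> A"
    using that assms(2,3) fin by auto
  ultimately have "card (A \<inter> Y) = 0" "card (A - Y) = card (G - Y)" "card Y \<le> card B"
    using le by (auto split: if_splits)
  then have "A \<inter> Y = {}" "A - Y = G - Y"
    using fin sub assms(1) by (simp_all add: card_subset_eq)
  then have A: "A = G - Y"
    by blast
  then have "B \<subseteq> Y"
    using assms(5,6) by blast
  with \<open>card Y \<le> card B\<close> have "B = Y"
    using fin by (meson card_seteq)
  with A show ?thesis ..
qed

lemma vcg_ex_post_efficient_bid_strict_mono: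
  fixes G :: "'b set"
  assumes "finite G" "finite N" "vcg_rule N G f" "ex_post_equilibrium N G f s"
    and "efficient N G f s" "i1 \<in> N" "i2 \<in> N" "i1 \<noteq> i2" "X \<subset> Y" "Y \<subseteq> G"
  shows "s i2 (card_valuation G) X < s i2 (card_valuation G) Y"
proof -
  define \<theta> where "\<theta> j = (if j = i1 then bonus_valuation G X Y
      else if j = i2 then card_valuation G else (\<lambda>_. 0))" for j
  define b where "b = (\<lambda>j. s j (\<theta> j))"
  define two where "two (A :: 'b set) B = (\<lambda>j. if j = i1 then A else if j = i2 then B else {})" for A B
  have "X \<subset> G"
    using assms(9,10) by blast
  then have types: "type_profile N G \<theta>"
    using valuation_card_valuation[OF assms(1)] valuation_bonus_valuation[OF assms(1)] valuation_zero
    by (auto simp: type_profile_def \<theta>_def)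
  then have "\<forall>j\<in>N. valuation G (b j)"
    using assms(4) by (simp add: b_def ex_post_equilibrium_def strategy_profile_def type_profile_def)
  then have fb: "f b \<in> outcomes N G" and bids_empty: "\<And>j. j \<in> N \<Longrightarrow> b j {} = 0"
    using assms(3) by (auto simp: vcg_rule_def valuation_def)
  have two: "two A B \<in> outcomes N G" if "A \<subseteq> G" "B \<subseteq> G" "A \<inter> B = {}" for A B
    using that assms(6-8) by (auto simp: outcomes_def two_def)
  have "welfare N \<theta> ou = bonus_valuation G X Y (ou i1) + card_valuation G (ou i2)" for ou
  proof -
    have "welfare (N - {i1}) \<theta> ou = \<theta> i2 (ou i2)"
      using assms(2,6-8) by (intro welfare_concentrated) (auto simp: \<theta>_def)
    then show ?thesis
      using assms(2,6,8) by (simp add: welfare_remove \<theta>_def)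
  qed
  moreover have "welfare N \<theta> (two (G - Y) Y) \<le> welfare N \<theta> (f b)"
    using assms(5) types two[of "G - Y" Y] assms(10) unfolding efficient_def b_def by blast
  moreover have "f b i1 \<subseteq> G" "f b i2 \<subseteq> G" "f b i1 \<inter> f b i2 = {}"
    using fb assms(6-8) by (auto simp: outcomes_def)
  ultimately have "f b i1 = G - Y \<and> f b i2 = Y"
    using bonus_card_optimum_unique[OF assms(1,9,10)] assms(8) by (simp add: two_def)
  moreover have "f b j = {}" if "j \<noteq> i1" "j \<noteq> i2" for j
    using fb assms(6,7,10) that \<open>f b i1 = G - Y \<and> f b i2 = Y\<close>
    unfolding outcomes_def by (cases "j \<in> N") blast+
  ultimately have equilibrium_outcome: "f b = two (G - Y) Y"
    unfolding two_def by (intro ext) simp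
  have others: "welfare (N - {i1}) b (two A B) = b i2 B" for A B
  proof -
    have "welfare (N - {i1}) b (two A B) = b i2 (two A B i2)"
      using assms(2,6-8) bids_empty by (intro welfare_concentrated) (auto simp: two_def)
    then show ?thesis
      using assms(8) by (simp add: two_def)
  qed
  have "\<theta> i1 (two (G - X) X i1) + welfare (N - {i1}) b (two (G - X) X)
      \<le> \<theta> i1 (f b i1) + welfare (N - {i1}) b (f b)"
    using vcg_ex_post_equilibrium_maximizes[OF assms(2-4) types assms(6) two[of "G - X" X]]
      assms(9,10) unfolding b_def by blast
  then have "bonus_valuation G X Y (G - X) + b i2 X \<le> bonus_valuation G X Y (G - Y) + b i2 Y"
    unfolding equilibrium_outcome others by (simp add: two_def \<theta>_def)
  moreover have "bonus_valuation G X Y (G - X) = bonus_valuation G X Y (G - Y) + 1/2"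
    using assms(9,10) by (auto simp: bonus_valuation_def intro!: arg_cong[where f = card])
  ultimately show ?thesis
    using assms(7,8) by (simp add: b_def \<theta>_def)
qed

theorem proposition6:
  fixes N :: "'a set" and G :: "'b set"
    and f :: "('a \<Rightarrow> 'b set \<Rightarrow> real) \<Rightarrow> ('a \<Rightarrow> 'b set)"
    and s :: "'a \<Rightarrow> ('b set \<Rightarrow> real) \<Rightarrow> ('b set \<Rightarrow> real)"
  assumes "finite G" and "finite N" and "card G \<ge> 3" and "card N \<ge> 2"
    and "vcg_rule N G f"
    and "ex_post_equilibrium N G f s"
    and "efficient N G f s"
  shows "\<exists>\<theta>. type_profile N G \<theta> \<and>
           (\<exists>i\<in>N. \<forall>X Y. X \<subset> Y \<and> Y \<subseteq> G \<longrightarrow> s i (\<theta> i) X \<noteq> s i (\<theta> i) Y)"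
proof -
  obtain i1 i2 where agents: "i1 \<in> N" "i2 \<in> N" "i1 \<noteq> i2"
    using assms(2,4) card_le_Suc0_iff_eq[of N] by fastforce
  have "type_profile N G (\<lambda>_. card_valuation G)"
    using valuation_card_valuation[OF assms(1)] by (simp add: type_profile_def)
  moreover have "s i2 (card_valuation G) X \<noteq> s i2 (card_valuation G) Y"
    if "X \<subset> Y" "Y \<subseteq> G" for X Y
    using vcg_ex_post_efficient_bid_strict_mono[OF assms(1,2,5-7) agents that] by simp
  ultimately show ?thesis
    using agents(2) by blast
qed

end
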